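(* Let $P(z)=z^2-bz+c$ with $(b,c)\in\mathbb{C}^2$. Then $P$ has one root of modulus $1$ and the other root of modulus at most $1$ if and only if $|c|^2-\frac12|b|^2-\frac12|b^2-4c|+1=0$ and $|c|\leq1$. *)

theory Defs
  imports "HOL-Analysis.Analysis"
begin

end

theory Submission
  imports Defs
begin

text \<open>Writing the roots as \<open>u, v\<close>, so that \<open>b = u + v\<close> and \<open>c = u v\<close>, we have
  \<open>b\<^sup>2 - 4c = (u - v)\<^sup>2\<close>, and the parallelogram law turns the left-hand side of the
  equation into \<open>(\<bar>u\<bar>\<^sup>2 - 1)(\<bar>v\<bar>\<^sup>2 - 1)\<close>. It vanishes iff one root lies on the unit
  circle, and then \<open>\<bar>c\<bar> \<le> 1\<close> says exactly that the other root lies in the closed disc.\<close>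

lemma norm_parallelogram_law:
  fixes x y :: "'a::real_inner"
  shows "(norm (x + y))\<^sup>2 + (norm (x - y))\<^sup>2 = 2 * ((norm x)\<^sup>2 + (norm y)\<^sup>2)"
  using dot_norm[of x y] dot_norm_neg[of x y] by (simp add: field_simps)

lemma monic_quadratic_factor_iff:
  fixes b c u v :: "'a::comm_ring_1"
  shows "(\<forall>z. z\<^sup>2 - b * z + c = (z - u) * (z - v)) \<longleftrightarrow> b = u + v \<and> c = u * v"
proof
  assume factor: "\<forall>z. z\<^sup>2 - b * z + c = (z - u) * (z - v)"
  from factor[rule_format, of 0] have c: "c = u * v" by simp
  from factor[rule_format, of 1] have "1 - b + c = (1 - u) * (1 - v)" by simp
  with c have "b = u + v" by (simp add: algebra_simps)
  with c show "b = u + v \<and> c = u * v" by simp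
qed (auto simp: power2_eq_square algebra_simps)

lemma Vieta_roots_unique:
  fixes u v z1 z2 :: "'a::idom"
  assumes "z1 + z2 = u + v" "z1 * z2 = u * v"
  shows "(z1 = u \<and> z2 = v) \<or> (z1 = v \<and> z2 = u)"
proof -
  have "(z1 - u) * (z1 - v) = z1 * z1 - (u + v) * z1 + u * v" by (simp add: algebra_simps)
  also have "\<dots> = z1 * z1 - (z1 + z2) * z1 + z1 * z2" using assms by simp
  also have "\<dots> = 0" by (simp add: algebra_simps)
  finally have "z1 = u \<or> z1 = v" by simp
  with assms show ?thesis by auto
qed

lemma complex_Vieta_roots_exist:
  fixes b c :: complex
  obtains u v where "b = u + v" "c = u * v"
proof
  define d where "d = csqrt (b\<^sup>2 - 4 * c)"
  have "d\<^sup>2 = b\<^sup>2 - 4 * c" unfolding d_def by simp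
  then show "b = (b + d) / 2 + (b - d) / 2" "c = (b + d) / 2 * ((b - d) / 2)"
    by (simp_all add: field_simps power2_eq_square)
qed

lemma unit_circle_quadratic_expression:
  fixes u v :: complex
  shows "(cmod (u * v))\<^sup>2 - 1/2 * (cmod (u + v))\<^sup>2 - 1/2 * cmod ((u + v)\<^sup>2 - 4 * (u * v)) + 1
         = ((cmod u)\<^sup>2 - 1) * ((cmod v)\<^sup>2 - 1)"
proof -
  have "(u + v)\<^sup>2 - 4 * (u * v) = (u - v)\<^sup>2" by (simp add: power2_eq_square algebra_simps)
  then have "cmod ((u + v)\<^sup>2 - 4 * (u * v)) = (cmod (u - v))\<^sup>2" by (simp add: norm_power)
  then show ?thesis
    using norm_parallelogram_law[of u v] by (simp add: norm_mult power_mult_distrib algebra_simps)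
qed

lemma one_eq_and_other_le_one_iff:
  fixes x y :: real
  assumes "x \<ge> 0" "y \<ge> 0"
  shows "(x = 1 \<and> y \<le> 1) \<or> (y = 1 \<and> x \<le> 1) \<longleftrightarrow> (x\<^sup>2 - 1) * (y\<^sup>2 - 1) = 0 \<and> x * y \<le> 1"
proof -
  have "x\<^sup>2 = 1 \<longleftrightarrow> x = 1" "y\<^sup>2 = 1 \<longleftrightarrow> y = 1"
    using assms by (simp_all add: power2_eq_1_iff)
  then show ?thesis by auto
qed

theorem proposition3p2:
  fixes b c :: complex
  shows "(\<exists>z1 z2. (\<forall>z. z^2 - b*z + c = (z - z1) * (z - z2)) \<and> cmod z1 = 1 \<and> cmod z2 \<le> 1)
         \<longleftrightarrow> ((cmod c)^2 - (1/2) * (cmod b)^2 - (1/2) * cmod (b^2 - 4*c) + 1 = 0 \<and> cmod c \<le> 1)"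
proof -
  obtain u v where b: "b = u + v" and c: "c = u * v"
    using complex_Vieta_roots_exist .
  have "(\<exists>z1 z2. (\<forall>z. z^2 - b*z + c = (z - z1) * (z - z2)) \<and> cmod z1 = 1 \<and> cmod z2 \<le> 1)
        \<longleftrightarrow> (cmod u = 1 \<and> cmod v \<le> 1) \<or> (cmod v = 1 \<and> cmod u \<le> 1)"
    unfolding monic_quadratic_factor_iff b c
  proof
    assume "\<exists>z1 z2. (u + v = z1 + z2 \<and> u * v = z1 * z2) \<and> cmod z1 = 1 \<and> cmod z2 \<le> 1"
    then obtain z1 z2 where "z1 + z2 = u + v" "z1 * z2 = u * v" "cmod z1 = 1" "cmod z2 \<le> 1"
      by auto
    then show "(cmod u = 1 \<and> cmod v \<le> 1) \<or> (cmod v = 1 \<and> cmod u \<le> 1)"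
      using Vieta_roots_unique by blast
  qed (metis add.commute mult.commute)
  also have "\<dots> \<longleftrightarrow> ((cmod c)^2 - (1/2) * (cmod b)^2 - (1/2) * cmod (b^2 - 4*c) + 1 = 0 \<and> cmod c \<le> 1)"
    unfolding b c unit_circle_quadratic_expression
    by (simp add: one_eq_and_other_le_one_iff norm_mult)
  finally show ?thesis .
qed

end
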